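(* Let $X=\{x\in\mathbb{R}^n: l\le x\le u\}$ and $\mathcal{Z}=\{x\in\mathbb{R}^n: x_i\in\mathbb{Z}\ \text{for all } i\in I^z\}$ as in the context. Then the set $\bar D=\bigcup_{x\in X\cap\mathcal{Z}} D^z(x)$ has finitely many elements.
   Context: Let $\{1,\dots,n\}=I^c\cup I^z$ with $I^c\cap I^z=\emptyset$. For $v\in\mathbb{R}^n$ let $v_z=(v_i)_{i\in I^z}$. Let $l,u\in\mathbb{R}^n$ (finite) with $l_i<u_i$ for all $i$ and $l_i,u_i\in\mathbb{Z}$ for $i\in I^z$. A vector $w\in\mathbb{Z}^p$ is called primitive if the greatest common divisor of its components is $1$. For $x\in X\cap\mathcal{Z}$, the set of feasible primitive directions is $D^z(x)=\{d\in\mathbb{Z}^n:\ d_i=0 \text{ for all } i\in I^c,\ d_z \text{ is primitive},\ x+d\in X\cap\mathcal{Z}\}$. *)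

theory Defs
  imports "HOL-Analysis.Analysis"
begin

text \<open>Vectors in R^n are modelled as real^'n with a finite index type 'n.
 Iz is the set of integer indices; the continuous indices are its complement.\<close>

definition boxX :: "real^'n \<Rightarrow> real^'n \<Rightarrow> (real^'n) set" where
  "boxX l u = {x. \<forall>i. l$i \<le> x$i \<and> x$i \<le> u$i}"

definition intZ :: "'n set \<Rightarrow> (real^'n) set" where
  "intZ Iz = {x. \<forall>i\<in>Iz. x$i \<in> \<int>}"

definition is_int_vec :: "real^'n \<Rightarrow> bool" where
  "is_int_vec d \<longleftrightarrow> (\<forall>i. d$i \<in> \<int>)"

definition primitive_on :: "'n set \<Rightarrow> real^'n \<Rightarrow> bool" where
  "primitive_on Iz d \<longleftrightarrow> Gcd ((\<lambda>i. \<lfloor>d$i\<rfloor>) ` Iz) = (1::int)"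

definition Dz :: "'n set \<Rightarrow> real^'n \<Rightarrow> real^'n \<Rightarrow> real^'n \<Rightarrow> (real^'n) set" where
  "Dz Iz l u x = {d. is_int_vec d \<and> (\<forall>i. i \<notin> Iz \<longrightarrow> d$i = 0) \<and> primitive_on Iz d
                    \<and> x + d \<in> boxX l u \<inter> intZ Iz}"

end

theory Submission
  imports Defs
begin

text \<open>Both endpoints of a feasible direction lie in the box, so each component of the
  direction is an integer of absolute value at most the width of the box in that
  coordinate. There are only finitely many such integer vectors.\<close>

lemma finite_bounded_int_vecs:
  fixes b :: "'n::finite \<Rightarrow> real"
  shows "finite {d :: real^'n. is_int_vec d \<and> (\<forall>i. \<bar>d$i\<bar> \<le> b i)}"
proof -
  define S where "S i = (of_int ` {-\<lceil>b i\<rceil>..\<lceil>b i\<rceil>} :: real set)" for i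
  have "{d. is_int_vec d \<and> (\<forall>i. \<bar>d$i\<bar> \<le> b i)} \<subseteq> vec_lambda ` PiE UNIV S"
  proof
    fix d :: "real^'n"
    assume d: "d \<in> {d. is_int_vec d \<and> (\<forall>i. \<bar>d$i\<bar> \<le> b i)}"
    have "d$i \<in> S i" for i
    proof -
      have "d$i \<in> \<int>" using d unfolding is_int_vec_def by simp
      then obtain k where k: "d$i = of_int k" by (elim Ints_cases)
      have "\<bar>d$i\<bar> \<le> b i" using d by simp
      then have "\<bar>real_of_int k\<bar> \<le> b i" by (simp only: k)
      then have "\<bar>k\<bar> \<le> \<lceil>b i\<rceil>" by (simp add: le_ceiling_iff)
      then have "k \<in> {-\<lceil>b i\<rceil>..\<lceil>b i\<rceil>}" by (simp add: abs_le_iff)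
      then show ?thesis unfolding S_def k by (rule imageI)
    qed
    then have "vec_nth d \<in> PiE UNIV S" by auto
    then show "d \<in> vec_lambda ` PiE UNIV S" by (metis image_eqI vec_lambda_eta)
  qed
  moreover have "finite (vec_lambda ` PiE UNIV S :: (real^'n) set)"
    unfolding S_def by (intro finite_imageI finite_PiE) auto
  ultimately show ?thesis by (rule finite_subset)
qed

lemma boxX_translate_abs_le:
  assumes "x \<in> boxX l u" and "x + d \<in> boxX l u"
  shows "\<bar>d$i\<bar> \<le> u$i - l$i"
proof -
  have "l$i \<le> x$i" "x$i \<le> u$i" "l$i \<le> x$i + d$i" "x$i + d$i \<le> u$i"
    using assms unfolding boxX_def by auto
  then show ?thesis by linarith
qed

lemma Dz_subset_bounded_int_vecs:
  assumes "x \<in> boxX l u"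
  shows "Dz Iz l u x \<subseteq> {d. is_int_vec d \<and> (\<forall>i. \<bar>d$i\<bar> \<le> u$i - l$i)}"
  using assms boxX_translate_abs_le unfolding Dz_def by blast

theorem mainTheorem1:
  fixes l u :: "real^'n" and Iz :: "'n set"
  assumes "\<forall>i. l$i < u$i"
    and "\<forall>i\<in>Iz. l$i \<in> \<int> \<and> u$i \<in> \<int>"
  shows "finite (\<Union>x\<in>boxX l u \<inter> intZ Iz. Dz Iz l u x)"
proof (rule finite_subset)
  show "(\<Union>x\<in>boxX l u \<inter> intZ Iz. Dz Iz l u x)
      \<subseteq> {d. is_int_vec d \<and> (\<forall>i. \<bar>d$i\<bar> \<le> u$i - l$i)}"
    using Dz_subset_bounded_int_vecs by blast
  show "finite {d :: real^'n. is_int_vec d \<and> (\<forall>i. \<bar>d$i\<bar> \<le> u$i - l$i)}"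
    by (rule finite_bounded_int_vecs)
qed

end
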